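(* Let $k$ be a non-archimedean local field of residue characteristic $2$. Let $B(x)=a(x_1^2-\Delta x_2^2)$ on $k^2$, where $|\Delta|=|\varpi|$ and $a$ is a unit of $\mathfrak o$ with quadratic defect $4\mathfrak o$. Let $z=q^{-\beta}$, $w=zq^{-1}$, and $t\in\mathfrak o\setminus\{0\}$ with $|t|=q^{-T}$. Then \[ X^B(\beta;t^2)=|2|\,\frac{1-w^{2T+e+1}}{1-w}. \]
   Context: $k$ has ring of integers $\mathfrak o$, uniformizer $\varpi$, residue field of cardinality $q$, absolute value normalized by $|\varpi|=q^{-1}$, and $e=\operatorname{ord}(2)$ is the ramification index. On $\mathfrak o^n$ use the additive Haar measure of total mass $1$. For a quadratic form $B$ on $k^n$, $\rho\in\mathfrak o$ and integer $\ell\ge0$: $X_\ell^B(\rho)=\operatorname{meas}\{x\in\mathfrak o^n: B(x)-\rho\in 2\varpi^\ell\mathfrak o\}$ and $X^B(\beta;\rho)=\sum_{\ell\ge0}z^\ell X_\ell^B(\rho)$ with $z=q^{-\beta}$. The quadratic defect of $\rho\in k$ is the intersection of all ideals $b\mathfrak o$ over those $b\in k$ for which $\rho-b$ is a square in $k$. *)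

theory Defs
  imports "HOL-Analysis.Analysis" "HOL-Probability.Probability"
begin

text \<open>A discrete valuation v on a field k (value at 0 irrelevant; 0 has valuation +infinity
by convention, handled explicitly below), normalized so that it is surjective onto the integers.\<close>

definition discrete_val :: "('k::field \<Rightarrow> int) \<Rightarrow> bool" where
  "discrete_val v \<longleftrightarrow>
     (\<forall>x y. x \<noteq> 0 \<and> y \<noteq> 0 \<longrightarrow> v (x * y) = v x + v y) \<and>
     (\<forall>x y. x \<noteq> 0 \<and> y \<noteq> 0 \<and> x + y \<noteq> 0 \<longrightarrow> min (v x) (v y) \<le> v (x + y)) \<and>
     (\<exists>p. p \<noteq> 0 \<and> v p = 1)"

definition vball :: "('k::field \<Rightarrow> int) \<Rightarrow> int \<Rightarrow> 'k set" where
  "vball v n = {x. x = 0 \<or> n \<le> v x}"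

abbreviation intring :: "('k::field \<Rightarrow> int) \<Rightarrow> 'k set" where
  "intring v \<equiv> vball v 0"

definition residue_field :: "('k::field \<Rightarrow> int) \<Rightarrow> 'k set set" where
  "residue_field v = intring v // {(x, y). x \<in> intring v \<and> y \<in> intring v \<and> x - y \<in> vball v 1}"

definition resq :: "('k::field \<Rightarrow> int) \<Rightarrow> nat" where
  "resq v = card (residue_field v)"

definition val_complete :: "('k::field \<Rightarrow> int) \<Rightarrow> bool" where
  "val_complete v \<longleftrightarrow>
     (\<forall>s :: nat \<Rightarrow> 'k. (\<forall>n. \<exists>N. \<forall>i\<ge>N. \<forall>j\<ge>N. s i - s j \<in> vball v n) \<longrightarrow>
        (\<exists>L. \<forall>n. \<exists>N. \<forall>i\<ge>N. s i - L \<in> vball v n))"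

definition nonarch_local_field :: "('k::field \<Rightarrow> int) \<Rightarrow> bool" where
  "nonarch_local_field v \<longleftrightarrow> discrete_val v \<and> val_complete v \<and> finite (residue_field v)"

definition vabs :: "('k::field \<Rightarrow> int) \<Rightarrow> 'k \<Rightarrow> real" where
  "vabs v x = (if x = 0 then 0 else real (resq v) powr (- real_of_int (v x)))"

definition principal_o :: "('k::field \<Rightarrow> int) \<Rightarrow> 'k \<Rightarrow> 'k set" where
  "principal_o v b = {b * x | x. x \<in> intring v}"

definition quad_defect :: "('k::field \<Rightarrow> int) \<Rightarrow> 'k \<Rightarrow> 'k set" where
  "quad_defect v \<rho> = \<Inter> {principal_o v b | b. \<exists>y. \<rho> - b = y ^ 2}"

definition open_o2 :: "('k::field \<Rightarrow> int) \<Rightarrow> ('k \<times> 'k) set \<Rightarrow> bool" where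
  "open_o2 v U \<longleftrightarrow> U \<subseteq> intring v \<times> intring v \<and>
     (\<forall>(x1, x2) \<in> U. \<exists>m::nat. \<forall>y1 y2. y1 \<in> intring v \<and> y2 \<in> intring v \<and>
         y1 - x1 \<in> vball v m \<and> y2 - x2 \<in> vball v m \<longrightarrow> (y1, y2) \<in> U)"

definition haar_o2 :: "('k::field \<Rightarrow> int) \<Rightarrow> ('k \<times> 'k) measure \<Rightarrow> bool" where
  "haar_o2 v M \<longleftrightarrow>
     space M = intring v \<times> intring v \<and>
     sets M = sigma_sets (intring v \<times> intring v) {U. open_o2 v U} \<and>
     emeasure M (intring v \<times> intring v) = 1 \<and>
     (\<forall>A \<in> sets M. \<forall>c1 \<in> intring v. \<forall>c2 \<in> intring v.
        emeasure M ((\<lambda>(x1, x2). (x1 + c1, x2 + c2)) ` A) = emeasure M A)"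

definition Xl :: "('k::field \<Rightarrow> int) \<Rightarrow> ('k \<times> 'k) measure \<Rightarrow> 'k \<Rightarrow> ('k \<times> 'k \<Rightarrow> 'k) \<Rightarrow> 'k \<Rightarrow> nat \<Rightarrow> real" where
  "Xl v M p B \<rho> l = measure M {x \<in> intring v \<times> intring v. B x - \<rho> \<in> principal_o v (2 * p ^ l)}"

definition Xser :: "('k::field \<Rightarrow> int) \<Rightarrow> ('k \<times> 'k) measure \<Rightarrow> 'k \<Rightarrow> ('k \<times> 'k \<Rightarrow> 'k) \<Rightarrow> complex \<Rightarrow> 'k \<Rightarrow> complex" where
  "Xser v M p B \<beta> \<rho> = (\<Sum>l. (of_nat (resq v) powr (- \<beta>)) ^ l * complex_of_real (Xl v M p B \<rho> l))"

end

theory Submission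
  imports Defs
begin

text \<open>
  Because the quadratic defect of a is 4o, a is a square modulo 4: there is a unit u with
  a u^2 \<equiv> 1 (mod 4). Expanding around the approximate solution (t u, 0), with x1 = t u + h,
    B(x) - t^2 = t^2 (a u^2 - 1) + a (2 t u h + h^2 - \<Delta> x2^2),
  where the first term lies in 4 t^2 o and 2 t u has valuation T + e. As ord \<Delta> = 1, the two
  terms of the norm form h^2 - \<Delta> x2^2 have valuations of different parity and cannot cancel.
  Hence, for m = e + l \<le> 2 (T + e), the congruence B(x) \<equiv> t^2 (mod 2 \<varpi>^l) cuts out the box
  (t u + \<varpi>^\<lceil>m/2\<rceil> o) \<times> \<varpi>^\<lfloor>m/2\<rfloor> o of measure q^-m; for larger l it has no solution,
  since a solution would make a a square modulo 4 \<varpi>. So the series is a finite geometric sum.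
\<close>

section \<open>Valuations\<close>

lemma zero_mem_vball [simp]: "0 \<in> vball v n"
  by (simp add: vball_def)

lemma vball_mono: "m \<le> n \<Longrightarrow> x \<in> vball v n \<Longrightarrow> x \<in> vball v m"
  by (auto simp: vball_def)

lemma vabs_eq_powr_imp_val:
  assumes "1 < resq v" "x \<noteq> 0" "vabs v x = real (resq v) powr (- r)"
  shows "v x = r"
  using assms powr_inj[of "real (resq v)" "- real_of_int (v x)" "- r"] by (simp add: vabs_def)

locale discrete_valuation =
  fixes v :: "'k::field \<Rightarrow> int"
  assumes discrete_val: "discrete_val v"
begin

lemma val_mult: "x \<noteq> 0 \<Longrightarrow> y \<noteq> 0 \<Longrightarrow> v (x * y) = v x + v y"
  using discrete_val unfolding discrete_val_def by blast

lemma val_add_ge_min: "x \<noteq> 0 \<Longrightarrow> y \<noteq> 0 \<Longrightarrow> x + y \<noteq> 0 \<Longrightarrow> min (v x) (v y) \<le> v (x + y)"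
  using discrete_val unfolding discrete_val_def by blast

lemma val_one [simp]: "v 1 = 0"
  using val_mult[of 1 1] by simp

lemma val_inverse: "x \<noteq> 0 \<Longrightarrow> v (inverse x) = - v x"
  using val_mult[of x "inverse x"] by simp

lemma val_divide: "x \<noteq> 0 \<Longrightarrow> y \<noteq> 0 \<Longrightarrow> v (x / y) = v x - v y"
  using val_mult[of x "inverse y"] val_inverse[of y] by (simp add: divide_inverse)

lemma val_power: "x \<noteq> 0 \<Longrightarrow> v (x ^ n) = int n * v x"
  by (induction n) (simp_all add: val_mult algebra_simps)

lemma val_uminus:
  assumes "x \<noteq> 0"
  shows "v (- x) = v x"
proof -
  have "v (-1) = 0"
    using val_mult[of "-1" "-1"] by simp
  then show ?thesis
    using val_mult[of "-1" x] assms by simp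
qed

lemma val_square: "x \<noteq> 0 \<Longrightarrow> v (x ^ 2) = 2 * v x"
  using val_power[of x 2] by simp

lemma val_add_eq_of_less:
  assumes "x \<noteq> 0" "y \<noteq> 0" "v x < v y"
  shows "x + y \<noteq> 0 \<and> v (x + y) = v x"
proof -
  have nz: "x + y \<noteq> 0"
  proof
    assume "x + y = 0"
    then have "y = - x"
      by (simp add: add_eq_0_iff2)
    then show False
      using assms val_uminus[of x] by simp
  qed
  have "v x \<le> v (x + y)"
    using val_add_ge_min[OF assms(1,2) nz] assms(3) by simp
  moreover have "min (v (x + y)) (v (- y)) \<le> v x"
    using val_add_ge_min[OF nz, of "- y"] assms by simp
  then have "v (x + y) \<le> v x"
    using val_uminus[OF assms(2)] assms(3) by linarith
  ultimately show ?thesis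
    using nz by simp
qed

lemma vball_uminus: "x \<in> vball v n \<Longrightarrow> - x \<in> vball v n"
  by (cases "x = 0") (auto simp: vball_def val_uminus)

lemma vball_add:
  assumes "x \<in> vball v n" "y \<in> vball v n"
  shows "x + y \<in> vball v n"
proof (cases "x = 0 \<or> y = 0 \<or> x + y = 0")
  case False
  then show ?thesis
    using assms val_add_ge_min[of x y] by (auto simp: vball_def)
qed (use assms in auto)

lemma vball_diff: "x \<in> vball v n \<Longrightarrow> y \<in> vball v n \<Longrightarrow> x - y \<in> vball v n"
  using vball_add[of x n "- y"] vball_uminus[of y n] by simp

lemma vball_add_iff: "y \<in> vball v n \<Longrightarrow> y + z \<in> vball v n \<longleftrightarrow> z \<in> vball v n"
  using vball_add vball_diff[of "y + z" n y] by auto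

lemma vball_mult: "x \<in> vball v m \<Longrightarrow> y \<in> vball v n \<Longrightarrow> x * y \<in> vball v (m + n)"
  by (cases "x = 0 \<or> y = 0") (auto simp: vball_def val_mult)

lemma vball_power2: "x \<in> vball v n \<Longrightarrow> x ^ 2 \<in> vball v (2 * n)"
  using vball_mult[of x n x n] by (metis mult_2 power2_eq_square)

lemma mult_mem_vball_iff: "y \<noteq> 0 \<Longrightarrow> x * y \<in> vball v n \<longleftrightarrow> x \<in> vball v (n - v y)"
  by (cases "x = 0") (auto simp: vball_def val_mult)

lemma vball_val: "x \<noteq> 0 \<Longrightarrow> x \<in> vball v (v x)"
  by (simp add: vball_def)

lemma principal_o_eq_vball:
  assumes "c \<noteq> 0"
  shows "principal_o v c = vball v (v c)"
proof (intro equalityI subsetI)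
  fix z
  assume "z \<in> principal_o v c"
  then show "z \<in> vball v (v c)"
    using vball_mult[OF vball_val[OF assms], of _ 0] by (auto simp: principal_o_def)
next
  fix z
  assume z: "z \<in> vball v (v c)"
  have "z / c \<in> intring v"
    using z assms by (cases "z = 0") (auto simp: vball_def val_divide)
  moreover have "z = c * (z / c)"
    using assms by simp
  ultimately show "z \<in> principal_o v c"
    unfolding principal_o_def by blast
qed

lemma residue_representatives:
  assumes "finite (residue_field v)"
  obtains R where "finite R" "card R = resq v" "R \<subseteq> intring v"
    "\<And>y. y \<in> intring v \<Longrightarrow> \<exists>s\<in>R. y - s \<in> vball v 1"
    "\<And>s s'. s \<in> R \<Longrightarrow> s' \<in> R \<Longrightarrow> s - s' \<in> vball v 1 \<Longrightarrow> s = s'"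
proof -
  define r where "r = {(x, y). x \<in> intring v \<and> y \<in> intring v \<and> x - y \<in> vball v 1}"
  have equiv: "equiv (intring v) r"
  proof (rule equivI)
    show "r \<subseteq> intring v \<times> intring v"
      by (auto simp: r_def)
    show "refl_on (intring v) r"
      by (auto simp: refl_on_def r_def)
    show "sym r"
      by (auto simp: sym_def r_def dest: vball_uminus)
    show "trans r"
      by (auto simp: trans_def r_def dest: vball_add)
  qed
  have residue_field: "residue_field v = intring v // r"
    by (simp add: residue_field_def r_def)
  define rep where "rep C = (SOME x. x \<in> C)" for C :: "'k set"
  have rep: "rep C \<in> C" if "C \<in> residue_field v" for C
    using in_quotient_imp_non_empty[OF equiv] that unfolding residue_field rep_def
    by (metis some_in_eq)
  show thesis
  proof
    show "finite (rep ` residue_field v)"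
      using assms by simp
    have "inj_on rep (residue_field v)"
      using rep quotient_disj[OF equiv] unfolding residue_field by (metis disjoint_iff inj_onI)
    then show "card (rep ` residue_field v) = resq v"
      by (simp add: card_image resq_def)
    show "rep ` residue_field v \<subseteq> intring v"
      using rep in_quotient_imp_subset[OF equiv] unfolding residue_field by blast
  next
    fix y
    assume "y \<in> intring v"
    then have C: "r `` {y} \<in> residue_field v"
      by (simp add: residue_field quotientI)
    then have "(y, rep (r `` {y})) \<in> r"
      using rep by blast
    with C show "\<exists>s\<in>rep ` residue_field v. y - s \<in> vball v 1"
      by (auto simp: r_def)
  next
    fix s s'
    assume "s \<in> rep ` residue_field v" "s' \<in> rep ` residue_field v" "s - s' \<in> vball v 1"
    then show "s = s'"
      using rep quotient_eq_iff[OF equiv] in_quotient_imp_subset[OF equiv]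
      unfolding residue_field r_def by (smt (verit) case_prodI image_iff mem_Collect_eq subsetD)
  qed
qed

lemma two_le_resq:
  assumes "finite (residue_field v)"
  shows "2 \<le> resq v"
proof -
  obtain R where R: "finite R" "card R = resq v"
    "\<And>y. y \<in> intring v \<Longrightarrow> \<exists>s\<in>R. y - s \<in> vball v 1"
    using residue_representatives[OF assms] by metis
  obtain s0 s1 where s: "s0 \<in> R" "s1 \<in> R" "0 - s0 \<in> vball v 1" "1 - s1 \<in> vball v 1"
    using R(3)[of 0] R(3)[of 1] by (auto simp: vball_def)
  have "s0 \<noteq> s1"
  proof
    assume "s0 = s1"
    then have "(1 - s1) - (0 - s0) \<in> vball v 1"
      using s vball_diff by blast
    then show False
      using \<open>s0 = s1\<close> by (simp add: vball_def)
  qed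
  then have "card {s0, s1} \<le> card R"
    using s R(1) by (intro card_mono) auto
  with \<open>s0 \<noteq> s1\<close> R(2) show ?thesis
    by simp
qed

end

section \<open>Haar measure of boxes\<close>

definition vcoset :: "('k::field \<Rightarrow> int) \<Rightarrow> 'k \<Rightarrow> nat \<Rightarrow> 'k set" where
  "vcoset v c i = {x \<in> intring v. x - c \<in> vball v (int i)}"

context discrete_valuation
begin

lemma vcoset_translate:
  assumes "d \<in> intring v"
  shows "(\<lambda>x. x + d) ` vcoset v c i = vcoset v (c + d) i"
proof (intro equalityI subsetI)
  fix y
  assume "y \<in> vcoset v (c + d) i"
  then have "y - d \<in> vcoset v c i"
    using assms vball_diff by (auto simp: vcoset_def algebra_simps)
  then show "y \<in> (\<lambda>x. x + d) ` vcoset v c i"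
    by (auto intro: image_eqI[of _ _ "y - d"])
qed (use assms vball_add in \<open>auto simp: vcoset_def algebra_simps\<close>)

lemma open_vcoset_times: "open_o2 v (vcoset v c1 i \<times> vcoset v c2 j)"
  unfolding open_o2_def
proof (intro conjI ballI)
  show "vcoset v c1 i \<times> vcoset v c2 j \<subseteq> intring v \<times> intring v"
    by (auto simp: vcoset_def)
next
  fix x
  assume x: "x \<in> vcoset v c1 i \<times> vcoset v c2 j"
  have "y1 - c1 \<in> vball v i \<and> y2 - c2 \<in> vball v j"
    if "y1 - fst x \<in> vball v (max i j)" "y2 - snd x \<in> vball v (max i j)" for y1 y2
    using vball_add[of "y1 - fst x" i "fst x - c1"] vball_add[of "y2 - snd x" j "snd x - c2"]
      vball_mono[OF _ that(1), of i] vball_mono[OF _ that(2), of j] x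
    by (auto simp: vcoset_def)
  then show "case x of (x1, x2) \<Rightarrow> \<exists>m::nat. \<forall>y1 y2. y1 \<in> intring v \<and> y2 \<in> intring v \<and>
      y1 - x1 \<in> vball v m \<and> y2 - x2 \<in> vball v m \<longrightarrow> (y1, y2) \<in> vcoset v c1 i \<times> vcoset v c2 j"
    by (cases x) (auto simp: vcoset_def intro!: exI[of _ "max i j"])
qed

end

lemma (in finite_measure) measure_UN_eq_card_mult:
  fixes m :: real
  assumes "finite I" "A ` I \<subseteq> sets M" "disjoint_family_on A I" "\<And>i. i \<in> I \<Longrightarrow> measure M (A i) = m"
  shows "measure M (\<Union>i\<in>I. A i) = card I * m"
  using finite_measure_finite_Union[OF assms(1-3)] assms(4) by simp

locale haar_plane = discrete_valuation v for v :: "'k::field \<Rightarrow> int" +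
  fixes M :: "('k \<times> 'k) measure" and p :: 'k and R :: "'k set"
  assumes haar: "haar_o2 v M"
    and uniformizer: "p \<noteq> 0" "v p = 1"
    and reps_finite: "finite R"
    and reps_subset: "R \<subseteq> intring v"
    and reps_cover: "\<And>y. y \<in> intring v \<Longrightarrow> \<exists>s\<in>R. y - s \<in> vball v 1"
    and reps_distinct: "\<And>s s'. s \<in> R \<Longrightarrow> s' \<in> R \<Longrightarrow> s - s' \<in> vball v 1 \<Longrightarrow> s = s'"
begin

sublocale finite_measure M
  using haar by (intro finite_measureI) (simp add: haar_o2_def)

lemma card_reps_pos: "0 < card R"
  using reps_finite reps_cover[of 0] by (auto simp: card_gt_0_iff)

lemma vcoset_times_sets: "vcoset v c1 i \<times> vcoset v c2 j \<in> sets M"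
  using haar open_vcoset_times unfolding haar_o2_def by (auto intro: sigma_sets.Basic)

lemma measure_vcoset_times_translate:
  assumes "c1 \<in> intring v" "c2 \<in> intring v"
  shows "measure M (vcoset v c1 i \<times> vcoset v c2 j) = measure M (vcoset v 0 i \<times> vcoset v 0 j)"
proof -
  have "(\<lambda>(x1, x2). (x1 + c1, x2 + c2)) ` (vcoset v 0 i \<times> vcoset v 0 j)
      = (\<lambda>x. x + c1) ` vcoset v 0 i \<times> (\<lambda>x. x + c2) ` vcoset v 0 j"
    by force
  also have "\<dots> = vcoset v c1 i \<times> vcoset v c2 j"
    using assms by (simp add: vcoset_translate)
  finally show ?thesis
    using haar vcoset_times_sets assms unfolding haar_o2_def measure_def by metis
qed

lemma power_mult_mem_vball: "s \<in> intring v \<Longrightarrow> p ^ i * s \<in> vball v (int i)"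
  using vball_mult[OF vball_val[of "p ^ i"], of s 0] uniformizer by (simp add: val_power)

lemma power_mult_rep_mem_intring: "s \<in> R \<Longrightarrow> p ^ i * s \<in> intring v"
  using power_mult_mem_vball[of s i] reps_subset vball_mono[of 0 "int i"] by auto

lemma vcoset_zero_eq_UN: "vcoset v 0 i = (\<Union>s\<in>R. vcoset v (p ^ i * s) (Suc i))"
proof (intro equalityI subsetI)
  fix x
  assume x: "x \<in> vcoset v 0 i"
  define y where "y = x / p ^ i"
  have "y \<in> intring v"
    using x uniformizer by (cases "x = 0") (auto simp: y_def vcoset_def vball_def val_divide val_power)
  then obtain s where s: "s \<in> R" "y - s \<in> vball v 1"
    using reps_cover by blast
  have "p ^ i * (y - s) \<in> vball v (int i + 1)"
    using vball_mult[OF vball_val[of "p ^ i"] s(2)] uniformizer by (simp add: val_power)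
  then have "x - p ^ i * s \<in> vball v (int (Suc i))"
    using uniformizer by (simp add: y_def algebra_simps)
  with x s(1) show "x \<in> (\<Union>s\<in>R. vcoset v (p ^ i * s) (Suc i))"
    by (auto simp: vcoset_def)
next
  fix x
  assume "x \<in> (\<Union>s\<in>R. vcoset v (p ^ i * s) (Suc i))"
  then obtain s where s: "s \<in> R" "x \<in> intring v" "x - p ^ i * s \<in> vball v (1 + int i)"
    by (auto simp: vcoset_def)
  have "p ^ i * s \<in> vball v (int i)"
    using power_mult_mem_vball s(1) reps_subset by blast
  moreover have "x - p ^ i * s \<in> vball v (int i)"
    using vball_mono[OF _ s(3)] by simp
  ultimately have "(x - p ^ i * s) + p ^ i * s \<in> vball v (int i)"
    by (intro vball_add) simp_all
  with s(2) show "x \<in> vcoset v 0 i"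
    by (simp add: vcoset_def)
qed

lemma disjoint_vcoset_reps: "disjoint_family_on (\<lambda>s. vcoset v (p ^ i * s) (Suc i)) R"
  unfolding disjoint_family_on_def
proof (intro ballI impI, rule ccontr)
  fix s s'
  assume s: "s \<in> R" "s' \<in> R" "s \<noteq> s'"
    and "vcoset v (p ^ i * s) (Suc i) \<inter> vcoset v (p ^ i * s') (Suc i) \<noteq> {}"
  then obtain x where "x - p ^ i * s \<in> vball v (1 + int i)" "x - p ^ i * s' \<in> vball v (1 + int i)"
    by (auto simp: vcoset_def)
  then have "(x - p ^ i * s') - (x - p ^ i * s) \<in> vball v (1 + int i)"
    by (rule vball_diff[rotated])
  then have "(s - s') * p ^ i \<in> vball v (1 + int i)"
    by (simp add: algebra_simps)
  then have "s - s' \<in> vball v 1"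
    using uniformizer by (simp add: mult_mem_vball_iff val_power)
  with s show False
    using reps_distinct by blast
qed

lemma measure_vcoset_times_Suc_left:
  "measure M (vcoset v 0 i \<times> vcoset v 0 j) = card R * measure M (vcoset v 0 (Suc i) \<times> vcoset v 0 j)"
proof -
  have "vcoset v 0 i \<times> vcoset v 0 j = (\<Union>s\<in>R. vcoset v (p ^ i * s) (Suc i) \<times> vcoset v 0 j)"
    unfolding vcoset_zero_eq_UN[of i] by blast
  also have "measure M \<dots> = card R * measure M (vcoset v 0 (Suc i) \<times> vcoset v 0 j)"
  proof (rule measure_UN_eq_card_mult[OF reps_finite])
    show "disjoint_family_on (\<lambda>s. vcoset v (p ^ i * s) (Suc i) \<times> vcoset v 0 j) R"
      using disjoint_vcoset_reps[of i] by (auto simp: disjoint_family_on_def)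
    show "(\<lambda>s. vcoset v (p ^ i * s) (Suc i) \<times> vcoset v 0 j) ` R \<subseteq> sets M"
      using vcoset_times_sets by blast
    show "measure M (vcoset v (p ^ i * s) (Suc i) \<times> vcoset v 0 j)
        = measure M (vcoset v 0 (Suc i) \<times> vcoset v 0 j)" if "s \<in> R" for s
      using measure_vcoset_times_translate[OF power_mult_rep_mem_intring[OF that], of 0] by simp
  qed
  finally show ?thesis .
qed

lemma measure_vcoset_times_Suc_right:
  "measure M (vcoset v 0 i \<times> vcoset v 0 j) = card R * measure M (vcoset v 0 i \<times> vcoset v 0 (Suc j))"
proof -
  have "vcoset v 0 i \<times> vcoset v 0 j = (\<Union>s\<in>R. vcoset v 0 i \<times> vcoset v (p ^ j * s) (Suc j))"
    unfolding vcoset_zero_eq_UN[of j] by blast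
  also have "measure M \<dots> = card R * measure M (vcoset v 0 i \<times> vcoset v 0 (Suc j))"
  proof (rule measure_UN_eq_card_mult[OF reps_finite])
    show "disjoint_family_on (\<lambda>s. vcoset v 0 i \<times> vcoset v (p ^ j * s) (Suc j)) R"
      using disjoint_vcoset_reps[of j] by (auto simp: disjoint_family_on_def)
    show "(\<lambda>s. vcoset v 0 i \<times> vcoset v (p ^ j * s) (Suc j)) ` R \<subseteq> sets M"
      using vcoset_times_sets by blast
    show "measure M (vcoset v 0 i \<times> vcoset v (p ^ j * s) (Suc j))
        = measure M (vcoset v 0 i \<times> vcoset v 0 (Suc j))" if "s \<in> R" for s
      using measure_vcoset_times_translate[OF _ power_mult_rep_mem_intring[OF that], of 0] by simp
  qed
  finally show ?thesis .
qed

lemma measure_vcoset_times: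
  assumes "c1 \<in> intring v" "c2 \<in> intring v"
  shows "measure M (vcoset v c1 i \<times> vcoset v c2 j) = 1 / card R ^ (i + j)"
proof -
  have "card R ^ (i + j) * measure M (vcoset v 0 i \<times> vcoset v 0 j) = 1"
  proof (induction i)
    case 0
    show ?case
    proof (induction j)
      case 0
      have "vcoset v 0 0 = intring v"
        by (auto simp: vcoset_def)
      then show ?case
        using haar by (simp add: haar_o2_def measure_def)
    next
      case (Suc j)
      then show ?case
        using measure_vcoset_times_Suc_right[of 0 j] by (simp add: algebra_simps)
    qed
  next
    case (Suc i)
    then show ?case
      using measure_vcoset_times_Suc_left[of i j] by (simp add: algebra_simps)
  qed
  then show ?thesis
    using measure_vcoset_times_translate[OF assms] card_reps_pos by (simp add: field_simps)
qed

end

lemma (in discrete_valuation) haar_plane_exists: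
  assumes "finite (residue_field v)" "haar_o2 v M" "p \<noteq> 0" "v p = 1"
  obtains R where "haar_plane v M p R" "card R = resq v"
proof -
  obtain R where "finite R" "card R = resq v" "R \<subseteq> intring v"
    "\<And>y. y \<in> intring v \<Longrightarrow> \<exists>s\<in>R. y - s \<in> vball v 1"
    "\<And>s s'. s \<in> R \<Longrightarrow> s' \<in> R \<Longrightarrow> s - s' \<in> vball v 1 \<Longrightarrow> s = s'"
    using residue_representatives[OF assms(1)] by metis
  then have "haar_plane v M p R"
    using assms(2-4) by unfold_locales auto
  with \<open>card R = resq v\<close> show thesis
    using that by blast
qed

section \<open>The ramified norm form and the quadratic defect\<close>

context discrete_valuation
begin

lemma norm_form_val_le:
  assumes "\<Delta> \<noteq> 0" "v \<Delta> = 1" "h1 \<noteq> 0"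
  shows "h1 ^ 2 - \<Delta> * h2 ^ 2 \<noteq> 0 \<and> v (h1 ^ 2 - \<Delta> * h2 ^ 2) \<le> 2 * v h1"
proof (cases "h2 = 0")
  case True
  then show ?thesis
    using assms val_square by simp
next
  case False
  have nz: "h1 ^ 2 \<noteq> 0" "- (\<Delta> * h2 ^ 2) \<noteq> 0"
    using assms False by simp_all
  have val: "v (h1 ^ 2) = 2 * v h1" "v (- (\<Delta> * h2 ^ 2)) = 1 + 2 * v h2"
    using assms False by (simp_all add: val_square val_uminus val_mult)
  \<comment> \<open>The two valuations have different parity, so the smaller one is that of the sum.\<close>
  have "2 * v h1 \<noteq> 1 + 2 * v h2"
    by presburger
  then consider "2 * v h1 < 1 + 2 * v h2" | "1 + 2 * v h2 < 2 * v h1"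
    by linarith
  then show ?thesis
  proof cases
    case 1
    then show ?thesis
      using val_add_eq_of_less[OF nz] val by simp
  next
    case 2
    then show ?thesis
      using val_add_eq_of_less[OF nz(2,1)] val by (simp add: algebra_simps)
  qed
qed

lemma norm_form_mem_vball_iff:
  assumes "\<Delta> \<noteq> 0" "v \<Delta> = 1"
  shows "h1 ^ 2 - \<Delta> * h2 ^ 2 \<in> vball v m \<longleftrightarrow> h1 \<in> vball v ((m + 1) div 2) \<and> h2 \<in> vball v (m div 2)"
proof
  assume N: "h1 ^ 2 - \<Delta> * h2 ^ 2 \<in> vball v m"
  have h1: "h1 \<in> vball v ((m + 1) div 2)"
  proof (rule ccontr)
    assume "h1 \<notin> vball v ((m + 1) div 2)"
    then have h1: "h1 \<noteq> 0" "2 * v h1 < m"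
      by (auto simp: vball_def)
    have "h1 ^ 2 - \<Delta> * h2 ^ 2 \<noteq> 0" "v (h1 ^ 2 - \<Delta> * h2 ^ 2) < m"
      using norm_form_val_le[OF assms h1(1), of h2] h1(2) by auto
    with N show False
      by (simp add: vball_def)
  qed
  have "h1 ^ 2 \<in> vball v m"
    using vball_power2[OF h1] by (rule vball_mono[rotated]) presburger
  then have "h1 ^ 2 - (h1 ^ 2 - \<Delta> * h2 ^ 2) \<in> vball v m"
    using N by (rule vball_diff)
  then have "h2 \<in> vball v (m div 2)"
    using assms by (cases "h2 = 0") (auto simp: vball_def val_mult val_square)
  with h1 show "h1 \<in> vball v ((m + 1) div 2) \<and> h2 \<in> vball v (m div 2)" ..
next
  assume h: "h1 \<in> vball v ((m + 1) div 2) \<and> h2 \<in> vball v (m div 2)"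
  have "h1 ^ 2 \<in> vball v m"
    using vball_power2[OF h[THEN conjunct1]] by (rule vball_mono[rotated]) presburger
  moreover have "\<Delta> * h2 ^ 2 \<in> vball v (v \<Delta> + 2 * (m div 2))"
    using vball_mult[OF vball_val vball_power2] h assms(1) by blast
  then have "\<Delta> * h2 ^ 2 \<in> vball v m"
    by (rule vball_mono[rotated]) (unfold assms(2), presburger)
  ultimately show "h1 ^ 2 - \<Delta> * h2 ^ 2 \<in> vball v m"
    by (rule vball_diff)
qed

lemma perturbed_norm_form_mem_vball_iff:
  assumes "\<Delta> \<noteq> 0" "v \<Delta> = 1" "c \<noteq> 0" "m \<le> 2 * v c"
  shows "c * h1 + (h1 ^ 2 - \<Delta> * h2 ^ 2) \<in> vball v m
    \<longleftrightarrow> h1 \<in> vball v ((m + 1) div 2) \<and> h2 \<in> vball v (m div 2)"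
proof (cases "h1 \<in> vball v ((m + 1) div 2)")
  case True
  then have "c * h1 \<in> vball v (v c + (m + 1) div 2)"
    using assms(3) by (blast intro: vball_mult vball_val)
  then have "c * h1 \<in> vball v m"
    by (rule vball_mono[rotated]) (use assms(4) in presburger)
  then show ?thesis
    using vball_add_iff norm_form_mem_vball_iff[OF assms(1,2)] by blast
next
  case False
  then have h1: "h1 \<noteq> 0" "v h1 < (m + 1) div 2"
    by (auto simp: vball_def)
  define N where "N = h1 ^ 2 - \<Delta> * h2 ^ 2"
  have N: "N \<noteq> 0" "v N \<le> 2 * v h1"
    using norm_form_val_le[OF assms(1,2) h1(1)] by (simp_all add: N_def)
  have "v N < v (c * h1)"
    using N(2) h1 assms(3,4) by (simp add: val_mult)
  then have "c * h1 + N \<noteq> 0 \<and> v (c * h1 + N) = v N"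
    using val_add_eq_of_less[OF N(1), of "c * h1"] assms(3) h1(1) by (simp add: add.commute)
  moreover have "v N < m"
    using N(2) h1(2) by linarith
  ultimately have "c * h1 + N \<notin> vball v m"
    by (simp add: vball_def)
  with False show ?thesis
    by (simp add: N_def)
qed

lemma square_approx_of_quad_defect:
  assumes "quad_defect v a \<subseteq> vball v (int n)" "1 \<le> n"
  obtains b y where "a - b = y ^ 2" "b \<in> vball v (int n)"
proof -
  obtain p where p: "p \<noteq> 0" "v p = 1"
    using discrete_val unfolding discrete_val_def by blast
  have "\<exists>b y. a - b = y ^ 2 \<and> b \<in> vball v (int n)"
  proof (rule ccontr)
    assume none: "\<not> ?thesis"
    \<comment> \<open>Then every admissible b has valuation below n, so \<varpi>^(n-1) lies in the defect.\<close>
    have "p ^ (n - 1) \<in> quad_defect v a"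
      unfolding quad_defect_def
    proof (rule InterI)
      fix X
      assume "X \<in> {principal_o v b |b. \<exists>y. a - b = y ^ 2}"
      then obtain b y where X: "X = principal_o v b" "a - b = y ^ 2"
        by blast
      then have "b \<noteq> 0" "v b \<le> int (n - 1)"
        using none by (auto simp: vball_def)
      then show "p ^ (n - 1) \<in> X"
        using X(1) p by (simp add: principal_o_eq_vball vball_def val_power)
    qed
    then show False
      using assms p by (auto simp: vball_def val_power)
  qed
  then show thesis
    using that by blast
qed

lemma unit_square_approx_of_quad_defect:
  assumes "a \<noteq> 0" "v a = 0" "quad_defect v a \<subseteq> vball v (int n)" "1 \<le> n"
  obtains u where "u \<noteq> 0" "v u = 0" "a * u ^ 2 - 1 \<in> vball v (int n)"
proof -
  obtain b y where approx: "a - b = y ^ 2" "b \<in> vball v (int n)"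
    using square_approx_of_quad_defect[OF assms(3,4)] .
  have "y ^ 2 \<noteq> 0 \<and> v (y ^ 2) = 0"
  proof (cases "b = 0")
    case False
    then have "v a < v (- b)"
      using approx(2) assms(2,4) by (simp add: vball_def val_uminus)
    then show ?thesis
      using val_add_eq_of_less[OF assms(1), of "- b"] False by (simp add: approx(1) assms(2))
  qed (use approx(1) assms in simp)
  then have y: "y \<noteq> 0" "v y = 0"
    using val_square by auto
  show thesis
  proof (rule that)
    show "inverse y \<noteq> 0" "v (inverse y) = 0"
      using y by (simp_all add: val_inverse)
    have "a * inverse y ^ 2 - 1 = b * inverse y ^ 2"
      using approx(1) y by (simp add: field_simps)
    moreover have "b * inverse y ^ 2 \<in> vball v (int n + 0)"
      using vball_mult[OF approx(2), of "inverse y ^ 2" 0] y by (simp add: vball_def val_inverse val_square)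
    ultimately show "a * inverse y ^ 2 - 1 \<in> vball v (int n)"
      by simp
  qed
qed

lemma val_le_of_quad_defect:
  assumes "quad_defect v a = principal_o v c" "c \<noteq> 0" "a - b = y ^ 2"
  shows "b \<noteq> 0 \<and> v b \<le> v c"
proof -
  have "c \<in> principal_o v c"
    unfolding principal_o_def by (auto intro: exI[of _ 1] simp: vball_def)
  then have "c \<in> principal_o v b"
    using assms(1,3) unfolding quad_defect_def by blast
  then obtain z where z: "z \<in> intring v" "c = b * z"
    by (auto simp: principal_o_def)
  then show ?thesis
    using assms(2) by (auto simp: vball_def val_mult)
qed

end

section \<open>The congruences \<open>B(x) \<equiv> t\<^sup>2\<close>\<close>

locale ramified_form = discrete_valuation v for v :: "'k::field \<Rightarrow> int" +
  fixes a \<Delta> t :: 'k and e T :: nat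
  assumes two_nonzero: "(2::'k) \<noteq> 0" and val_two: "v 2 = int e" and e_pos: "1 \<le> e"
    and a_nonzero: "a \<noteq> 0" and val_a: "v a = 0"
    and a_defect: "quad_defect v a = principal_o v 4"
    and Delta_nonzero: "\<Delta> \<noteq> 0" and val_Delta: "v \<Delta> = 1"
    and t_nonzero: "t \<noteq> 0" and val_t: "v t = int T"
begin

lemma val_four: "(4::'k) \<noteq> 0 \<and> v 4 = 2 * int e"
proof -
  have "(4::'k) = 2 * 2"
    by simp
  then have "(4::'k) \<noteq> 0"
    using two_nonzero by (metis no_zero_divisors)
  then show ?thesis
    using val_mult[OF two_nonzero two_nonzero] val_two by simp
qed

lemma exists_unit_square_approx:
  obtains u where "u \<noteq> 0" "v u = 0" "a * u ^ 2 - 1 \<in> vball v (2 * int e)"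
proof -
  have "quad_defect v a \<subseteq> vball v (int (2 * e))"
    using a_defect val_four principal_o_eq_vball by simp
  then show thesis
    by (rule unit_square_approx_of_quad_defect[OF a_nonzero val_a]) (use e_pos that in auto)
qed

lemma form_sub_square_mem_vball_iff:
  assumes u: "u \<noteq> 0" "v u = 0" "a * u ^ 2 - 1 \<in> vball v (2 * int e)"
    and m: "m \<le> 2 * (int T + int e)"
  shows "a * (x1 ^ 2 - \<Delta> * x2 ^ 2) - t ^ 2 \<in> vball v m
    \<longleftrightarrow> x1 - t * u \<in> vball v ((m + 1) div 2) \<and> x2 \<in> vball v (m div 2)"
proof -
  define h1 where "h1 = x1 - t * u"
  define Q where "Q = 2 * t * u * h1 + (h1 ^ 2 - \<Delta> * x2 ^ 2)"
  have expand: "a * (x1 ^ 2 - \<Delta> * x2 ^ 2) - t ^ 2 = t ^ 2 * (a * u ^ 2 - 1) + a * Q"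
    by (simp add: Q_def h1_def algebra_simps power2_eq_square)
  have "t ^ 2 * (a * u ^ 2 - 1) \<in> vball v (2 * v t + 2 * int e)"
    using vball_mult[OF vball_power2[OF vball_val[OF t_nonzero]] u(3)] .
  then have error: "t ^ 2 * (a * u ^ 2 - 1) \<in> vball v m"
    by (rule vball_mono[rotated]) (use m val_t in simp)
  have unit: "a * Q \<in> vball v m \<longleftrightarrow> Q \<in> vball v m"
    using mult_mem_vball_iff[OF a_nonzero, of Q m] val_a by (simp add: mult.commute)
  have c: "2 * t * u \<noteq> 0" "v (2 * t * u) = int T + int e"
    using two_nonzero t_nonzero u val_two val_t by (simp_all add: val_mult)
  have "Q \<in> vball v m \<longleftrightarrow> h1 \<in> vball v ((m + 1) div 2) \<and> x2 \<in> vball v (m div 2)"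
    unfolding Q_def using perturbed_norm_form_mem_vball_iff[OF Delta_nonzero val_Delta c(1)] c(2) m
    by simp
  then show ?thesis
    unfolding expand vball_add_iff[OF error] unit by (simp add: h1_def)
qed

lemma form_sub_square_not_mem_vball:
  "a * (x1 ^ 2 - \<Delta> * x2 ^ 2) - t ^ 2 \<notin> vball v (2 * (int T + int e) + 1)"
proof
  define K where "K = int T + int e"
  assume level: "a * (x1 ^ 2 - \<Delta> * x2 ^ 2) - t ^ 2 \<in> vball v (2 * (int T + int e) + 1)"
  obtain u where u: "u \<noteq> 0" "v u = 0" "a * u ^ 2 - 1 \<in> vball v (2 * int e)"
    using exists_unit_square_approx .
  have "a * (x1 ^ 2 - \<Delta> * x2 ^ 2) - t ^ 2 \<in> vball v (2 * K)"
    using level by (rule vball_mono[rotated]) (simp add: K_def)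
  then have x: "x1 - t * u \<in> vball v K" "x2 \<in> vball v K"
    using form_sub_square_mem_vball_iff[OF u, of "2 * K"] by (simp_all add: K_def)
  have "a * (\<Delta> * x2 ^ 2) \<in> vball v (v a + (v \<Delta> + 2 * K))"
    using vball_mult[OF vball_val[OF a_nonzero] vball_mult[OF vball_val[OF Delta_nonzero] vball_power2[OF x(2)]]] .
  then have "a * (\<Delta> * x2 ^ 2) \<in> vball v (2 * K + 1)"
    by (simp add: val_a val_Delta ac_simps)
  with level have "a * x1 ^ 2 - t ^ 2 \<in> vball v (2 * K + 1)"
    using vball_add[of "a * (x1 ^ 2 - \<Delta> * x2 ^ 2) - t ^ 2"] by (force simp: K_def algebra_simps)
  have tu: "t * u \<noteq> 0" "v (t * u) = int T"
    using t_nonzero u val_t by (simp_all add: val_mult)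
  have x1: "x1 \<noteq> 0 \<and> v x1 = int T"
  proof (cases "x1 - t * u = 0")
    case False
    then have "v (t * u) < v (x1 - t * u)"
      using x(1) tu e_pos by (simp add: vball_def K_def)
    then show ?thesis
      using val_add_eq_of_less[OF tu(1) False] tu by simp
  qed (use tu in simp)
  \<comment> \<open>Thus a is a square modulo 4 \<varpi>, which its quadratic defect 4o rules out.\<close>
  define b where "b = a - (t / x1) ^ 2"
  have "b * x1 ^ 2 = a * x1 ^ 2 - t ^ 2"
    using x1 by (simp add: b_def field_simps)
  with \<open>a * x1 ^ 2 - t ^ 2 \<in> vball v (2 * K + 1)\<close> have "b \<in> vball v (2 * int e + 1)"
    using mult_mem_vball_iff[of "x1 ^ 2" b] x1 by (simp add: val_square K_def)
  moreover have "b \<noteq> 0 \<and> v b \<le> v 4"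
    using val_le_of_quad_defect[OF a_defect, of b "t / x1"] val_four by (simp add: b_def)
  ultimately show False
    using val_four by (simp add: vball_def)
qed

end

lemma (in discrete_valuation) ramified_form_of_abs_values:
  assumes q: "1 < resq v"
    and two: "(2::'k) \<in> vball v 1" "(2::'k) \<noteq> 0" "int e = v 2"
    and p: "p \<noteq> 0" "v p = 1" and Delta: "vabs v \<Delta> = vabs v p"
    and a: "a \<noteq> 0" "v a = 0" "quad_defect v a = principal_o v 4"
    and t: "t \<noteq> 0" "vabs v t = real (resq v) powr (- real T)"
  shows "ramified_form v a \<Delta> t e T"
proof -
  have vabs_Delta: "vabs v \<Delta> = real (resq v) powr (- 1)"
    using Delta p by (simp add: vabs_def)
  then have "\<Delta> \<noteq> 0"
    using q by (auto simp: vabs_def)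
  moreover have "v \<Delta> = 1"
    using vabs_eq_powr_imp_val[OF q \<open>\<Delta> \<noteq> 0\<close> vabs_Delta] by simp
  moreover have "v t = int T"
    using vabs_eq_powr_imp_val[OF q t(1) t(2)] by simp
  moreover have "1 \<le> e"
    using two by (simp add: vball_def)
  ultimately show ?thesis
    using two a t by unfold_locales auto
qed

lemma (in haar_plane) Xl_ramified_form:
  assumes "ramified_form v a \<Delta> t e T"
  shows "Xl v M p (\<lambda>(x1, x2). a * (x1 ^ 2 - \<Delta> * x2 ^ 2)) (t ^ 2) l
    = (if l \<le> 2 * T + e then 1 / card R ^ (e + l) else 0)"
proof -
  interpret ramified_form v a \<Delta> t e T
    by fact
  define S where "S = {x \<in> intring v \<times> intring v.
    (\<lambda>(x1, x2). a * (x1 ^ 2 - \<Delta> * x2 ^ 2)) x - t ^ 2 \<in> vball v (int e + int l)}"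
  have "principal_o v (2 * p ^ l) = vball v (int e + int l)"
    using two_nonzero uniformizer val_two by (simp add: principal_o_eq_vball val_mult val_power)
  then have Xl: "Xl v M p (\<lambda>(x1, x2). a * (x1 ^ 2 - \<Delta> * x2 ^ 2)) (t ^ 2) l = measure M S"
    by (simp add: Xl_def S_def)
  show ?thesis
  proof (cases "l \<le> 2 * T + e")
    case True
    obtain u where u: "u \<noteq> 0" "v u = 0" "a * u ^ 2 - 1 \<in> vball v (2 * int e)"
      using exists_unit_square_approx .
    have tu: "t * u \<in> intring v"
      using t_nonzero u val_t by (simp add: vball_def val_mult)
    have half: "int ((e + l + 1) div 2) = (int e + int l + 1) div 2"
      "int ((e + l) div 2) = (int e + int l) div 2"
      by presburger+
    have "S = vcoset v (t * u) ((e + l + 1) div 2) \<times> vcoset v 0 ((e + l) div 2)"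
      using form_sub_square_mem_vball_iff[OF u, of "int e + int l"] True
      unfolding S_def vcoset_def half by auto
    moreover have "(e + l + 1) div 2 + (e + l) div 2 = e + l"
      by presburger
    ultimately show ?thesis
      using Xl True measure_vcoset_times[OF tu] by simp
  next
    case False
    have "S = {}"
      using form_sub_square_not_mem_vball vball_mono[of "2 * (int T + int e) + 1" "int e + int l"] False
      by (auto simp: S_def)
    then show ?thesis
      using Xl False by simp
  qed
qed

lemma sums_truncated_geometric:
  fixes c w :: "'a::real_normed_field"
  assumes "w \<noteq> 1"
  shows "(\<lambda>l. if l \<le> N then c * w ^ l else 0) sums (c * (1 - w ^ Suc N) / (1 - w))"
proof -
  have "(\<lambda>l. if l \<in> {..N} then c * w ^ l else 0) sums (\<Sum>l\<le>N. c * w ^ l)"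
    by (rule sums_If_finite_set) simp
  moreover have "(\<Sum>l\<le>N. c * w ^ l) = c * (1 - w ^ Suc N) / (1 - w)"
    using sum_gp_strict[of w "Suc N"] assms
    by (simp add: sum_distrib_left[symmetric] lessThan_Suc_atMost)
  ultimately show ?thesis
    by simp
qed

lemma (in haar_plane) Xl_series_sums:
  fixes z :: complex
  assumes "ramified_form v a \<Delta> t e T" "z / of_nat (card R) \<noteq> 1"
  shows "(\<lambda>l. z ^ l * complex_of_real (Xl v M p (\<lambda>(x1, x2). a * (x1 ^ 2 - \<Delta> * x2 ^ 2)) (t ^ 2) l))
    sums (1 / of_nat (card R) ^ e * (1 - (z / of_nat (card R)) ^ Suc (2 * T + e))
      / (1 - z / of_nat (card R)))"
proof -
  have "(\<lambda>l. z ^ l * complex_of_real (Xl v M p (\<lambda>(x1, x2). a * (x1 ^ 2 - \<Delta> * x2 ^ 2)) (t ^ 2) l))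
      = (\<lambda>l. if l \<le> 2 * T + e then 1 / of_nat (card R) ^ e * (z / of_nat (card R)) ^ l else 0)"
    using Xl_ramified_form[OF assms(1)] card_reps_pos
    by (auto simp: power_add power_divide field_simps)
  then show ?thesis
    by (simp only: sums_truncated_geometric[OF assms(2)])
qed

theorem proposition6p2:
  fixes v :: "'k::field \<Rightarrow> int" and M :: "('k \<times> 'k) measure"
    and p \<Delta> a t :: 'k and \<beta> :: complex and q e T :: nat
  assumes lf: "nonarch_local_field v"
    and res2: "(2::'k) \<in> vball v 1"
    and two_nz: "(2::'k) \<noteq> 0"
    and q_def: "q = resq v"
    and e_def: "int e = v 2"
    and unif: "p \<noteq> 0" "v p = 1"
    and haar: "haar_o2 v M"
    and Delta: "vabs v \<Delta> = vabs v p"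
    and a_unit: "a \<in> intring v" "a \<noteq> 0" "v a = 0"
    and a_defect: "quad_defect v a = principal_o v 4"
    and t: "t \<in> intring v" "t \<noteq> 0" "vabs v t = real q powr (- real T)"
    and w_ne1: "(of_nat q powr (- \<beta>)) / of_nat q \<noteq> 1"
  shows "summable (\<lambda>l. (of_nat q powr (- \<beta>)) ^ l
              * complex_of_real (Xl v M p (\<lambda>(x1, x2). a * (x1^2 - \<Delta> * x2^2)) (t^2) l))
    \<and> Xser v M p (\<lambda>(x1, x2). a * (x1^2 - \<Delta> * x2^2)) \<beta> (t^2)
      = complex_of_real (vabs v 2)
        * (1 - ((of_nat q powr (- \<beta>)) / of_nat q) ^ (2 * T + e + 1))
        / (1 - (of_nat q powr (- \<beta>)) / of_nat q)"
proof -
  interpret discrete_valuation v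
    using lf by (simp add: nonarch_local_field_def discrete_valuation_def)
  have fin: "finite (residue_field v)"
    using lf by (simp add: nonarch_local_field_def)
  obtain R where plane: "haar_plane v M p R" "card R = q"
    using haar_plane_exists[OF fin haar unif] q_def by metis
  have q: "1 < resq v"
    using two_le_resq[OF fin] by simp
  have form: "ramified_form v a \<Delta> t e T"
    using ramified_form_of_abs_values[OF q res2 two_nz e_def unif Delta a_unit(2,3) a_defect t(2)] t(3) q_def
    by simp
  have "vabs v 2 = 1 / real q ^ e"
    using two_nz q by (simp add: vabs_def flip: e_def add: q_def powr_minus powr_realpow divide_inverse)
  with haar_plane.Xl_series_sums[OF plane(1) form, of "of_nat q powr (- \<beta>)"] plane(2) w_ne1
  show ?thesis
    unfolding Xser_def q_def[symmetric] by (simp add: sums_iff)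
qed

end
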